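(* Let $n\ge1$ and let $I\subseteq\Bbbk[x_0,\dots,x_n]$ be a saturated Borel ideal. Then $P_{\nabla(I)}=\nabla(P_I)$.
   Context: $\Bbbk$ is an algebraically closed field. For a homogeneous ideal $J$ of a polynomial ring $R$, $P_J$ is the Hilbert polynomial of $R/J$. A monomial ideal $I$ is Borel if for every monomial $m\in I$, every $x_j\mid m$ and every $i<j$, $mx_i/x_j\in I$; it is saturated if $(I:\langle x_0,\dots,x_n\rangle^\infty)=I$. For a saturated Borel ideal $I\subseteq\Bbbk[x_0,\dots,x_n]$, $\nabla(I)\subseteq\Bbbk[x_0,\dots,x_{n-1}]$ is the ideal generated by the image of $I$ under the $\Bbbk$-algebra map $\Bbbk[x_0,\dots,x_n]\to\Bbbk[x_0,\dots,x_{n-1}]$ with $x_j\mapsto x_j$ for $0\le j\le n-2$ and $x_{n-1},x_n\mapsto1$. For a polynomial $q\in\mathbb{Q}[t]$, $[\nabla(q)](t):=q(t)-q(t-1)$. *)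

theory Defs
  imports "HOL-Computational_Algebra.Polynomial"
begin

(* Monomials of k[x_0,...,x_n] are identified with their exponent vectors
  a :: nat => nat with a i = 0 for i > n.  A monomial ideal is identified with the
  set of monomials it contains (which determines it, and the monomials outside it
  form a k-basis of the quotient ring). *)

definition monoms :: "nat \<Rightarrow> (nat \<Rightarrow> nat) set" where
  "monoms n = {a. \<forall>i>n. a i = 0}"

definition mdeg :: "nat \<Rightarrow> (nat \<Rightarrow> nat) \<Rightarrow> nat" where
  "mdeg n a = (\<Sum>i\<le>n. a i)"

definition mdvd :: "(nat \<Rightarrow> nat) \<Rightarrow> (nat \<Rightarrow> nat) \<Rightarrow> bool" where
  "mdvd a b \<longleftrightarrow> (\<forall>i. a i \<le> b i)"

definition monomial_ideal :: "nat \<Rightarrow> (nat \<Rightarrow> nat) set \<Rightarrow> bool" where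
  "monomial_ideal n M \<longleftrightarrow> M \<subseteq> monoms n \<and>
     (\<forall>a\<in>M. \<forall>b\<in>monoms n. mdvd a b \<longrightarrow> b \<in> M)"

(* Borel: m in I, x_j | m, i < j  implies  m x_i / x_j in I. *)
definition borel :: "nat \<Rightarrow> (nat \<Rightarrow> nat) set \<Rightarrow> bool" where
  "borel n M \<longleftrightarrow> monomial_ideal n M \<and>
     (\<forall>a\<in>M. \<forall>i j. i < j \<and> j \<le> n \<and> 0 < a j \<longrightarrow> (a(j := a j - 1))(i := a i + 1) \<in> M)"

(* Monomials of the saturation (I : <x_0..x_n>^\ <infinity>): m with m * <x_0..x_n>^k \ <subseteq> I
  for some k. *)
definition saturation :: "nat \<Rightarrow> (nat \<Rightarrow> nat) set \<Rightarrow> (nat \<Rightarrow> nat) set" where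
  "saturation n M = {b \<in> monoms n. \<exists>k. \<forall>c\<in>monoms n. mdeg n c = k \<longrightarrow> (\<lambda>i. b i + c i) \<in> M}"

definition saturated :: "nat \<Rightarrow> (nat \<Rightarrow> nat) set \<Rightarrow> bool" where
  "saturated n M \<longleftrightarrow> saturation n M = M"

(* Image of a monomial under x_j \ <mapsto> x_j (j \ <le> n-2), x_{n-1}, x_n \ <mapsto> 1. *)
definition nabla_mono :: "nat \<Rightarrow> (nat \<Rightarrow> nat) \<Rightarrow> (nat \<Rightarrow> nat)" where
  "nabla_mono n a = (\<lambda>j. if j + 2 \<le> n then a j else 0)"

(* nabla(I): ideal of k[x_0..x_{n-1}] generated by the image of I (a monomial
  ideal, generated by the images of the monomials of I). *)
definition nabla :: "nat \<Rightarrow> (nat \<Rightarrow> nat) set \<Rightarrow> (nat \<Rightarrow> nat) set" where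
  "nabla n M = {b \<in> monoms (n - 1). \<exists>a\<in>M. mdvd (nabla_mono n a) b}"

definition hilb_fun :: "nat \<Rightarrow> (nat \<Rightarrow> nat) set \<Rightarrow> nat \<Rightarrow> nat" where
  "hilb_fun n M d = card {a \<in> monoms n. mdeg n a = d \<and> a \<notin> M}"

definition is_hilbert_poly :: "nat \<Rightarrow> (nat \<Rightarrow> nat) set \<Rightarrow> rat poly \<Rightarrow> bool" where
  "is_hilbert_poly n M p \<longleftrightarrow> (\<exists>d0. \<forall>d\<ge>d0. poly p (of_nat d) = of_nat (hilb_fun n M d))"

(* The Hilbert polynomial P_I (unique when it exists). *)
definition hilbert_poly :: "nat \<Rightarrow> (nat \<Rightarrow> nat) set \<Rightarrow> rat poly" where
  "hilbert_poly n M = (THE p. is_hilbert_poly n M p)"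

definition nabla_poly :: "rat poly \<Rightarrow> rat poly" where
  "nabla_poly q = q - pcompose q [:-1, 1:]"

end

theory Submission imports Defs begin

(* If I is saturated and Borel, deleting x_n from a monomial of I stays in I (the x_n-part
   can be pushed into the other variables by Borel moves), so x_n is a nonzerodivisor on R/I:
   multiplication by x_n maps the standard monomials of degree d bijectively onto those of
   degree d + 1 that involve x_n.  The standard monomials of degree d + 1 free of x_n are, for
   large d, exactly those of nabla(I): by Dickson's lemma I is generated in bounded degree, and
   Borel moves into x_{n-1} show that a monomial of nabla(I) of large degree already lies in I.
   Hence H_I(d + 1) - H_I(d) = H_nabla(I)(d + 1) for large d.  As nabla(I) is again saturated
   and Borel, induction on n gives the existence of the Hilbert polynomials, and the identity
   passes to them. *)

lemma mdeg_fun_upd: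
  assumes "i \<le> n"
  shows "mdeg n (a(i := x)) + a i = mdeg n a + x"
proof -
  have split: "mdeg n b = b i + (\<Sum>j\<in>{..n} - {i}. b j)" for b
    using assms by (simp add: mdeg_def sum.remove)
  have "(\<Sum>j\<in>{..n} - {i}. (a(i := x)) j) = (\<Sum>j\<in>{..n} - {i}. a j)"
    by (intro sum.cong) auto
  then show ?thesis using split[of a] split[of "a(i := x)"] by simp
qed

lemma mdeg_borel_move:
  assumes "i < j" "j \<le> n" "0 < a j"
  shows "mdeg n ((a(j := a j - 1))(i := a i + 1)) = mdeg n a"
  using mdeg_fun_upd[of i n "a(j := a j - 1)" "a i + 1"] mdeg_fun_upd[of j n a "a j - 1"] assms
  by simp

lemma mdeg_mult_last: "mdeg n (a(n := Suc (a n))) = Suc (mdeg n a)"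
  using mdeg_fun_upd[of n n a "Suc (a n)"] by simp

lemma mdeg_add: "mdeg n (\<lambda>i. a i + b i) = mdeg n a + mdeg n b"
  by (simp add: mdeg_def sum.distrib)

lemma mdeg_last_zero:
  assumes "n \<ge> 1" "a n = 0"
  shows "mdeg n a = mdeg (n - 1) a"
  using assms by (cases n) (simp_all add: mdeg_def)

lemma monoms_pred_iff:
  assumes "n \<ge> 1"
  shows "a \<in> monoms (n - 1) \<longleftrightarrow> a \<in> monoms n \<and> a n = 0"
proof -
  have "n - 1 < i \<longleftrightarrow> i = n \<or> n < i" for i using assms by auto
  then show ?thesis by (auto simp: monoms_def)
qed

lemma finite_monoms_mdeg: "finite {a \<in> monoms n. mdeg n a = d}"
proof (rule finite_subset)
  show "{a \<in> monoms n. mdeg n a = d} \<subseteq>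
      {f. \<forall>x. (x \<in> {..n} \<longrightarrow> f x \<in> {..d}) \<and> (x \<notin> {..n} \<longrightarrow> f x = 0)}"
    by (auto simp: monoms_def mdeg_def intro: member_le_sum[of _ "{..n}", simplified])
  show "finite {f. \<forall>x. (x \<in> {..n} \<longrightarrow> f x \<in> {..d}) \<and> (x \<notin> {..n} \<longrightarrow> f x = (0::nat))}"
    by (intro finite_set_of_finite_funs) auto
qed

lemma mdvd_trans: "mdvd a b \<Longrightarrow> mdvd b c \<Longrightarrow> mdvd a c"
  unfolding mdvd_def using order_trans by blast

lemma mdvd_nabla_mono: "mdvd (nabla_mono n a) a"
  by (simp add: mdvd_def nabla_mono_def)

section \<open>Dickson's lemma\<close>

lemma mdvd_fun_upd_zero:
  assumes "mdvd (t(k := 0)) (s(k := 0))" "t k \<le> s k"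
  shows "mdvd t s"
proof -
  have "t i \<le> s i" for i
    using assms spec[OF assms(1)[unfolded mdvd_def], of i] by (cases "i = k") auto
  then show ?thesis by (simp add: mdvd_def)
qed

lemma dickson:
  assumes "S \<subseteq> {a. \<forall>i\<ge>k. a i = 0}"
  shows "\<exists>F. finite F \<and> F \<subseteq> S \<and> (\<forall>s\<in>S. \<exists>f\<in>F. mdvd f s)"
  using assms
proof (induction k arbitrary: S)
  case 0
  then have "S \<subseteq> {\<lambda>_. 0}" by auto
  then show ?case by (intro exI[of _ S]) (auto simp: mdvd_def finite_subset)
next
  case (Suc k)
  define proj where "proj a = a(k := 0)" for a :: "nat \<Rightarrow> nat"
  have proj_basis: "\<exists>L\<subseteq>T. finite L \<and> (\<forall>s\<in>T. \<exists>t\<in>L. mdvd (proj t) (proj s))" if "T \<subseteq> S" for T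
  proof -
    have "proj ` T \<subseteq> {a. \<forall>i\<ge>k. a i = 0}"
      using that Suc.prems by (auto simp: proj_def Suc_le_eq le_neq_implies_less)
    from Suc.IH[OF this]
    obtain F where F: "finite F" "F \<subseteq> proj ` T" "\<forall>s\<in>proj ` T. \<exists>f\<in>F. mdvd f s"
      by blast
    obtain L where L: "L \<subseteq> T" "finite L" "F = proj ` L"
      using finite_subset_image[OF F(1,2)] by blast
    have "\<exists>t\<in>L. mdvd (proj t) (proj s)" if s: "s \<in> T" for s
    proof -
      obtain f where "f \<in> F" "mdvd f (proj s)" using F(3) s by blast
      then show ?thesis using L(3) by blast
    qed
    then show ?thesis using L(1,2) by blast
  qed
  obtain L where L: "L \<subseteq> S" "finite L" "\<forall>s\<in>S. \<exists>t\<in>L. mdvd (proj t) (proj s)"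
    using proj_basis[OF order_refl] by blast
  define K where "K = Max (insert 0 ((\<lambda>t. t k) ` L))"
  \<comment> \<open>below level \<open>K\<close> in the variable \<open>x\<^sub>k\<close>, treat each slice \<open>s k = v\<close> separately\<close>
  have "\<forall>v. \<exists>G. finite G \<and> G \<subseteq> S \<and> (\<forall>s\<in>S. s k = v \<longrightarrow> (\<exists>t\<in>G. mdvd t s))"
  proof
    fix v
    obtain G where G: "G \<subseteq> {s \<in> S. s k = v}" "finite G"
      "\<forall>s\<in>{s \<in> S. s k = v}. \<exists>t\<in>G. mdvd (proj t) (proj s)"
      using proj_basis[of "{s \<in> S. s k = v}"] by blast
    have "\<exists>t\<in>G. mdvd t s" if s: "s \<in> S" "s k = v" for s
    proof -
      obtain t where t: "t \<in> G" "mdvd (proj t) (proj s)" using G(3) s by blast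
      moreover have "t k = s k" using G(1) t(1) s(2) by blast
      ultimately show ?thesis using mdvd_fun_upd_zero[of t k s] unfolding proj_def by auto
    qed
    then show "\<exists>G. finite G \<and> G \<subseteq> S \<and> (\<forall>s\<in>S. s k = v \<longrightarrow> (\<exists>t\<in>G. mdvd t s))"
      using G(1,2) by blast
  qed
  from choice[OF this] obtain G
    where G: "\<forall>v. finite (G v) \<and> G v \<subseteq> S \<and> (\<forall>s\<in>S. s k = v \<longrightarrow> (\<exists>t\<in>G v. mdvd t s))"
    by (elim exE)
  show ?case
  proof (intro exI[of _ "L \<union> (\<Union>v<K. G v)"] conjI ballI)
    show "finite (L \<union> (\<Union>v<K. G v))" using L(2) G by simp
    show "L \<union> (\<Union>v<K. G v) \<subseteq> S" using L(1) G by blast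
  next
    fix s assume s: "s \<in> S"
    show "\<exists>f\<in>L \<union> (\<Union>v<K. G v). mdvd f s"
    proof (cases "K \<le> s k")
      case True
      obtain t where t: "t \<in> L" "mdvd (proj t) (proj s)" using L(3) s by blast
      have "t k \<le> K" unfolding K_def using L(2) t(1) by (intro Max_ge) auto
      then have "mdvd t s" using mdvd_fun_upd_zero t(2) True unfolding proj_def by simp
      then show ?thesis using t(1) by blast
    next
      case False
      obtain t where "t \<in> G (s k)" "mdvd t s" using G s by blast
      then show ?thesis using False by auto
    qed
  qed
qed

lemma monomial_ideal_generated_in_bounded_degree:
  assumes "monomial_ideal n M"
  shows "\<exists>D. \<forall>a\<in>M. \<exists>f\<in>M. mdvd f a \<and> mdeg n f \<le> D"
proof -
  have "M \<subseteq> {a. \<forall>i\<ge>Suc n. a i = 0}"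
    using assms by (auto simp: monomial_ideal_def monoms_def)
  from dickson[OF this] obtain F where F: "finite F" "F \<subseteq> M" "\<forall>a\<in>M. \<exists>f\<in>F. mdvd f a"
    by blast
  have "\<exists>f\<in>M. mdvd f a \<and> mdeg n f \<le> Max (mdeg n ` F)" if a: "a \<in> M" for a
  proof -
    obtain f where f: "f \<in> F" "mdvd f a" using F(3) a by blast
    moreover have "mdeg n f \<le> Max (mdeg n ` F)" using F(1) f(1) by (intro Max_ge) auto
    ultimately show ?thesis using F(2) by blast
  qed
  then show ?thesis by blast
qed

section \<open>Borel ideals\<close>

lemma monomial_idealD:
  "monomial_ideal n M \<Longrightarrow> a \<in> M \<Longrightarrow> b \<in> monoms n \<Longrightarrow> mdvd a b \<Longrightarrow> b \<in> M"
  unfolding monomial_ideal_def by blast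

lemma borel_imp_monomial_ideal: "borel n M \<Longrightarrow> monomial_ideal n M"
  by (simp add: borel_def)

lemma borel_subset_monoms: "borel n M \<Longrightarrow> M \<subseteq> monoms n"
  by (simp add: borel_def monomial_ideal_def)

lemma borelD:
  "borel n M \<Longrightarrow> a \<in> M \<Longrightarrow> i < j \<Longrightarrow> j \<le> n \<Longrightarrow> 0 < a j \<Longrightarrow>
    (a(j := a j - 1))(i := a i + 1) \<in> M"
  unfolding borel_def by blast

lemma borel_mem_if_le_below_eq_above:
  assumes B: "borel n M" and m: "m \<le> n"
  shows "a \<in> M \<Longrightarrow> b \<in> monoms n \<Longrightarrow> \<forall>i<m. a i \<le> b i \<Longrightarrow> \<forall>i>m. a i = b i \<Longrightarrow>
    mdeg n a \<le> mdeg n b \<Longrightarrow> b \<in> M"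
proof (induction "a m" arbitrary: a rule: less_induct)
  case less
  show ?case
  proof (cases "a m \<le> b m")
    case True
    then have "mdvd a b"
      using less.prems(3,4) unfolding mdvd_def by (metis linorder_neqE_nat order_refl)
    then show ?thesis
      using monomial_idealD[OF borel_imp_monomial_ideal[OF B] less.prems(1,2)] by blast
  next
    case False
    \<comment> \<open>the surplus of \<open>a\<close> at \<open>x\<^sub>m\<close> is matched by a deficit at some \<open>x\<^sub>i\<close>, \<open>i < m\<close>, where one unit is moved\<close>
    have "\<exists>i<m. a i < b i"
    proof (rule ccontr)
      assume "\<not> ?thesis"
      then have "b i \<le> a i" for i
        using False less.prems(4) by (cases i m rule: linorder_cases) auto
      then have "mdeg n b < mdeg n a"
        unfolding mdeg_def using m False by (intro sum_strict_mono_ex1) (auto intro!: bexI[of _ m])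
      then show False using less.prems(5) by simp
    qed
    then obtain i where i: "i < m" "a i < b i" by blast
    define a' where "a' = (a(m := a m - 1))(i := a i + 1)"
    have "0 < a m" using False by simp
    then have "a' \<in> M" and "mdeg n a' = mdeg n a"
      using borelD[OF B less.prems(1) i(1) m] mdeg_borel_move[OF i(1) m] unfolding a'_def by auto
    moreover have "a' m < a m" "\<forall>j<m. a' j \<le> b j" "\<forall>j>m. a' j = b j"
      using \<open>0 < a m\<close> i less.prems(3,4) unfolding a'_def by auto
    ultimately show ?thesis using less.hyps less.prems(2,5) by simp
  qed
qed

lemma saturated_borel_mem_if_le_below_last:
  assumes B: "borel n M" and S: "saturated n M" and a: "a \<in> M"
    and b: "b \<in> monoms n" "\<forall>i<n. a i \<le> b i"
  shows "b \<in> M"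
proof -
  have am: "a \<in> monoms n" using borel_subset_monoms[OF B] a by blast
  have "a(n := 0) \<in> saturation n M"
    unfolding saturation_def
  proof (intro CollectI conjI exI[of _ "a n"] ballI impI)
    show "a(n := 0) \<in> monoms n" using am by (simp add: monoms_def)
    fix c assume c: "c \<in> monoms n" "mdeg n c = a n"
    have "mdeg n (\<lambda>i. (a(n := 0)) i + c i) = mdeg n a"
      using mdeg_add[of n "a(n := 0)" c] mdeg_fun_upd[of n n a 0] c(2) by simp
    then show "(\<lambda>i. (a(n := 0)) i + c i) \<in> M"
      using am c(1) by (intro borel_mem_if_le_below_eq_above[OF B order_refl a]) (auto simp: monoms_def)
  qed
  then have "a(n := 0) \<in> M" using S by (simp add: saturated_def)
  moreover have "(a(n := 0)) i \<le> b i" for i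
    using am b(2) by (cases i n rule: linorder_cases) (auto simp: monoms_def)
  then have "mdvd (a(n := 0)) b" by (simp add: mdvd_def)
  ultimately show ?thesis
    using monomial_idealD[OF borel_imp_monomial_ideal[OF B] _ b(1)] by blast
qed

lemma saturated_borel_mult_last_iff:
  assumes B: "borel n M" and S: "saturated n M" and b: "b \<in> monoms n"
  shows "b(n := Suc (b n)) \<in> M \<longleftrightarrow> b \<in> M"
proof
  assume "b(n := Suc (b n)) \<in> M"
  then show "b \<in> M" using saturated_borel_mem_if_le_below_last[OF B S _ b] by simp
next
  assume "b \<in> M"
  moreover have "b(n := Suc (b n)) \<in> monoms n" "mdvd b (b(n := Suc (b n)))"
    using b by (auto simp: monoms_def mdvd_def)
  ultimately show "b(n := Suc (b n)) \<in> M"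
    using monomial_idealD[OF borel_imp_monomial_ideal[OF B]] by blast
qed

lemma subset_saturation:
  assumes "M \<subseteq> monoms n"
  shows "M \<subseteq> saturation n M"
proof
  fix b assume b: "b \<in> M"
  have "c = (\<lambda>_. 0)" if c: "c \<in> monoms n" "mdeg n c = 0" for c
  proof
    fix i show "c i = 0"
      using c by (cases "i \<le> n") (auto simp: mdeg_def monoms_def)
  qed
  then have "\<forall>c\<in>monoms n. mdeg n c = 0 \<longrightarrow> (\<lambda>i. b i + c i) \<in> M" using b by fastforce
  then show "b \<in> saturation n M" using b assms unfolding saturation_def by blast
qed

section \<open>The ideal \<open>\<nabla>(I)\<close>\<close>

lemma nabla_subset_monoms: "nabla n M \<subseteq> monoms (n - 1)"
  by (auto simp: nabla_def)

lemma nabla_borel: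
  assumes B: "borel n M"
  shows "borel (n - 1) (nabla n M)"
  unfolding borel_def monomial_ideal_def
proof (intro conjI ballI allI impI nabla_subset_monoms)
  fix a b assume "a \<in> nabla n M" "b \<in> monoms (n - 1)" "mdvd a b"
  then show "b \<in> nabla n M" unfolding nabla_def using mdvd_trans by blast
next
  fix b i j assume b: "b \<in> nabla n M" and ij: "i < j \<and> j \<le> n - 1 \<and> 0 < b j"
  let ?b = "(b(j := b j - 1))(i := b i + 1)"
  from b obtain a where a: "a \<in> M" "mdvd (nabla_mono n a) b" and bm: "b \<in> monoms (n - 1)"
    unfolding nabla_def by blast
  have bm': "?b \<in> monoms (n - 1)" using bm ij by (simp add: monoms_def)
  show "?b \<in> nabla n M"
  proof (cases "nabla_mono n a j < b j")
    case True
    have "nabla_mono n a x \<le> ?b x" for x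
      using spec[OF a(2)[unfolded mdvd_def], of x] True ij by auto
    then have "mdvd (nabla_mono n a) ?b" by (simp add: mdvd_def)
    then show ?thesis using bm' a(1) unfolding nabla_def by blast
  next
    case False
    \<comment> \<open>the generator must then be moved along with \<open>b\<close>\<close>
    then have "nabla_mono n a j = b j"
      using spec[OF a(2)[unfolded mdvd_def], of j] by simp
    then have jn: "j + 2 \<le> n" and aj: "a j = b j"
      using ij by (auto simp: nabla_mono_def split: if_splits)
    define a' where "a' = (a(j := a j - 1))(i := a i + 1)"
    have "a' \<in> M" unfolding a'_def using borelD[OF B a(1), of i j] ij jn aj by auto
    moreover have "nabla_mono n a' x \<le> ?b x" for x
      using spec[OF a(2)[unfolded mdvd_def], of x] ij jn aj by (auto simp: a'_def nabla_mono_def)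
    then have "mdvd (nabla_mono n a') ?b" by (simp add: mdvd_def)
    ultimately show ?thesis using bm' unfolding nabla_def by blast
  qed
qed

lemma nabla_saturated: "saturated (n - 1) (nabla n M)"
  unfolding saturated_def
proof
  show "saturation (n - 1) (nabla n M) \<subseteq> nabla n M"
  proof
    fix b assume "b \<in> saturation (n - 1) (nabla n M)"
    then obtain k where bm: "b \<in> monoms (n - 1)" and
      k: "\<forall>c\<in>monoms (n - 1). mdeg (n - 1) c = k \<longrightarrow> (\<lambda>i. b i + c i) \<in> nabla n M"
      unfolding saturation_def by blast
    define c where "c = (\<lambda>_. 0)(n - 1 := k)"
    have "c \<in> monoms (n - 1)" "mdeg (n - 1) c = k"
      using mdeg_fun_upd[of "n - 1" "n - 1" "\<lambda>_. 0" k] by (auto simp: c_def monoms_def mdeg_def)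
    then obtain a where a: "a \<in> M" "mdvd (nabla_mono n a) (\<lambda>i. b i + c i)"
      using k unfolding nabla_def by blast
    have "nabla_mono n a x \<le> b x" for x
      using a(2)[unfolded mdvd_def, rule_format, of x] by (auto simp: nabla_mono_def c_def split: if_splits)
    then have "mdvd (nabla_mono n a) b" by (simp add: mdvd_def)
    then show "b \<in> nabla n M" using a(1) bm unfolding nabla_def by blast
  qed
qed (rule subset_saturation[OF nabla_subset_monoms])

lemma mem_if_nabla_mem_large_degree:
  assumes B: "borel n M" and S: "saturated n M" and n: "n \<ge> 1"
  shows "\<exists>D. \<forall>b\<in>nabla n M. D \<le> mdeg (n - 1) b \<longrightarrow> b \<in> M"
proof -
  obtain D where D: "\<forall>a\<in>M. \<exists>f\<in>M. mdvd f a \<and> mdeg n f \<le> D"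
    using monomial_ideal_generated_in_bounded_degree[OF borel_imp_monomial_ideal[OF B]] by blast
  have "b \<in> M" if b: "b \<in> nabla n M" and bd: "D \<le> mdeg (n - 1) b" for b
  proof -
    from b obtain a where a: "a \<in> M" "mdvd (nabla_mono n a) b" and bm: "b \<in> monoms (n - 1)"
      unfolding nabla_def by blast
    obtain f where f: "f \<in> M" "mdvd f a" "mdeg n f \<le> D" using D a(1) by blast
    have fm: "f \<in> monoms n" using borel_subset_monoms[OF B] f(1) by blast
    have bn: "b \<in> monoms n" "b n = 0" using bm monoms_pred_iff[OF n] by auto
    have f0: "f(n := 0) \<in> M"
      using fm by (intro saturated_borel_mem_if_le_below_last[OF B S f(1)]) (auto simp: monoms_def)
    show "b \<in> M"
    proof (rule borel_mem_if_le_below_eq_above[OF B _ f0 bn(1)])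
      show "\<forall>i<n - 1. (f(n := 0)) i \<le> b i"
      proof (intro allI impI)
        fix i assume i: "i < n - 1"
        have "f i \<le> a i" using f(2) by (simp add: mdvd_def)
        also have "a i = nabla_mono n a i" using i by (simp add: nabla_mono_def)
        also have "\<dots> \<le> b i" using a(2) by (simp add: mdvd_def)
        finally show "(f(n := 0)) i \<le> b i" using i by simp
      qed
      show "\<forall>i>n - 1. (f(n := 0)) i = b i"
        using fm bn by (auto simp: monoms_def)
      show "mdeg n (f(n := 0)) \<le> mdeg n b"
        using mdeg_fun_upd[of n n f 0] f(3) bd mdeg_last_zero[of n b, OF n bn(2)] by simp
    qed simp
  qed
  then show ?thesis by blast
qed

section \<open>The Hilbert function\<close>

definition standard_monoms :: "nat \<Rightarrow> (nat \<Rightarrow> nat) set \<Rightarrow> nat \<Rightarrow> (nat \<Rightarrow> nat) set" where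
  "standard_monoms n M d = {a \<in> monoms n. mdeg n a = d \<and> a \<notin> M}"

lemma hilb_fun_eq_card: "hilb_fun n M d = card (standard_monoms n M d)"
  by (simp add: hilb_fun_def standard_monoms_def)

lemma finite_standard_monoms: "finite (standard_monoms n M d)"
  using finite_monoms_mdeg[of n d] by (rule finite_subset[rotated]) (auto simp: standard_monoms_def)

lemma card_standard_monoms_last_pos:
  assumes B: "borel n M" and S: "saturated n M"
  shows "card (standard_monoms n M (Suc d) \<inter> {a. a n \<noteq> 0}) = hilb_fun n M d"
proof -
  let ?up = "\<lambda>a. a(n := Suc (a n))" and ?down = "\<lambda>a. a(n := a n - 1)"
  have "bij_betw ?up (standard_monoms n M d) (standard_monoms n M (Suc d) \<inter> {a. a n \<noteq> 0})"
  proof (rule bij_betw_byWitness[where f' = ?down])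
    show "?up ` standard_monoms n M d \<subseteq> standard_monoms n M (Suc d) \<inter> {a. a n \<noteq> 0}"
    proof (rule image_subsetI)
      fix a assume a: "a \<in> standard_monoms n M d"
      then have "a \<in> monoms n" "a \<notin> M" "mdeg n a = d" by (auto simp: standard_monoms_def)
      moreover have "?up a \<in> monoms n" using \<open>a \<in> monoms n\<close> by (simp add: monoms_def)
      ultimately show "?up a \<in> standard_monoms n M (Suc d) \<inter> {a. a n \<noteq> 0}"
        using saturated_borel_mult_last_iff[OF B S] by (simp add: standard_monoms_def mdeg_mult_last)
    qed
    show "?down ` (standard_monoms n M (Suc d) \<inter> {a. a n \<noteq> 0}) \<subseteq> standard_monoms n M d"
    proof (rule image_subsetI)
      fix a assume "a \<in> standard_monoms n M (Suc d) \<inter> {a. a n \<noteq> 0}"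
      then have a: "a \<in> standard_monoms n M (Suc d)" "a n \<noteq> 0" by auto
      have b: "?down a \<in> monoms n" "?up (?down a) = a"
        using a by (auto simp: standard_monoms_def monoms_def)
      then have "mdeg n (?down a) = d"
        using a(1) mdeg_mult_last[of n "?down a"] by (simp add: standard_monoms_def)
      moreover have "?down a \<notin> M"
        using a(1) b saturated_borel_mult_last_iff[OF B S b(1)] by (simp add: standard_monoms_def)
      ultimately show "?down a \<in> standard_monoms n M d"
        using b(1) by (simp add: standard_monoms_def)
    qed
  qed auto
  then show ?thesis by (simp add: hilb_fun_eq_card bij_betw_same_card)
qed

lemma standard_monoms_last_zero:
  assumes n: "n \<ge> 1" and large: "\<forall>b\<in>nabla n M. mdeg (n - 1) b = d \<longrightarrow> b \<in> M"
  shows "standard_monoms n M d - {a. a n \<noteq> 0} = standard_monoms (n - 1) (nabla n M) d"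
proof -
  have "a \<in> nabla n M \<longleftrightarrow> a \<in> M" if "a \<in> monoms (n - 1)" "mdeg (n - 1) a = d" for a
    using that large mdvd_nabla_mono[of n a] unfolding nabla_def by blast
  then show ?thesis
    using monoms_pred_iff[OF n] mdeg_last_zero[OF n] by (auto simp: standard_monoms_def)
qed

lemma eventually_hilb_fun_Suc:
  assumes B: "borel n M" and S: "saturated n M" and n: "n \<ge> 1"
  shows "\<exists>D. \<forall>d\<ge>D. hilb_fun n M (Suc d) = hilb_fun n M d + hilb_fun (n - 1) (nabla n M) (Suc d)"
proof -
  obtain D where D: "\<forall>b\<in>nabla n M. D \<le> mdeg (n - 1) b \<longrightarrow> b \<in> M"
    using mem_if_nabla_mem_large_degree[OF B S n] by blast
  have "hilb_fun n M (Suc d) = hilb_fun n M d + hilb_fun (n - 1) (nabla n M) (Suc d)" if "D \<le> d" for d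
  proof -
    have "\<forall>b\<in>nabla n M. mdeg (n - 1) b = Suc d \<longrightarrow> b \<in> M" using D that by auto
    then show ?thesis
      using card_Int_Diff[OF finite_standard_monoms, of n M "Suc d" "{a. a n \<noteq> 0}"]
        card_standard_monoms_last_pos[OF B S] standard_monoms_last_zero[OF n]
      by (simp add: hilb_fun_eq_card)
  qed
  then show ?thesis by blast
qed

section \<open>Hilbert polynomials\<close>

lemma poly_nabla_poly: "poly (nabla_poly q) x = poly q x - poly q (x - 1)"
  by (simp add: nabla_poly_def poly_pcompose)

lemma power_antidifference: "\<exists>S :: rat poly. \<forall>x. poly S x - poly S (x - 1) = x ^ k"
proof (induction k rule: less_induct)
  case (less k)
  then obtain T :: "nat \<Rightarrow> rat poly" where T: "\<And>j x. j < k \<Longrightarrow> poly (T j) x - poly (T j) (x - 1) = x ^ j"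
    by metis
  define c :: "nat \<Rightarrow> rat" where "c j = of_nat (Suc k choose j) * (-1) ^ (Suc k - j)" for j
  have binom: "x ^ Suc k - (x - 1) ^ Suc k = of_nat (Suc k) * x ^ k - (\<Sum>j<k. c j * x ^ j)" for x :: rat
  proof -
    have "(x + (-1)) ^ Suc k = (\<Sum>j\<le>Suc k. of_nat (Suc k choose j) * x ^ j * (-1) ^ (Suc k - j))"
      by (rule binomial_ring)
    also have "\<dots> = (\<Sum>j<k. c j * x ^ j) - of_nat (Suc k) * x ^ k + x ^ Suc k"
      by (simp add: c_def lessThan_Suc_atMost[symmetric] algebra_simps)
    finally show ?thesis by simp
  qed
  define S where "S = smult (1 / of_nat (Suc k)) (monom 1 (Suc k) + (\<Sum>j<k. smult (c j) (T j)))"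
  have "poly S x - poly S (x - 1) = x ^ k" for x
  proof -
    have "poly S x - poly S (x - 1) = (1 / of_nat (Suc k)) *
       ((x ^ Suc k - (x - 1) ^ Suc k) + (\<Sum>j<k. c j * (poly (T j) x - poly (T j) (x - 1))))"
      unfolding S_def
      by (simp add: poly_monom poly_sum algebra_simps sum_subtractf[symmetric] sum_distrib_left)
    also have "(\<Sum>j<k. c j * (poly (T j) x - poly (T j) (x - 1))) = (\<Sum>j<k. c j * x ^ j)"
      using T by simp
    also note binom
    finally show ?thesis by simp
  qed
  then show ?case by blast
qed

lemma poly_antidifference: "\<exists>S :: rat poly. \<forall>x. poly S x - poly S (x - 1) = poly Q x"
proof -
  obtain T :: "nat \<Rightarrow> rat poly" where T: "\<And>k x. poly (T k) x - poly (T k) (x - 1) = x ^ k"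
    using power_antidifference by metis
  define S where "S = (\<Sum>i\<le>degree Q. smult (coeff Q i) (T i))"
  have "poly S x - poly S (x - 1) = poly Q x" for x
  proof -
    have "poly S x - poly S (x - 1) = (\<Sum>i\<le>degree Q. coeff Q i * (poly (T i) x - poly (T i) (x - 1)))"
      unfolding S_def by (simp add: poly_sum algebra_simps sum_subtractf)
    also have "\<dots> = (\<Sum>i\<le>degree Q. coeff Q i * x ^ i)" using T by simp
    also have "\<dots> = poly Q x" by (simp add: poly_altdef)
    finally show ?thesis .
  qed
  then show ?thesis by blast
qed

lemma eventually_poly_if_difference_eventually_poly:
  fixes h :: "nat \<Rightarrow> rat"
  assumes "\<forall>d\<ge>D. h (Suc d) = h d + poly Q (of_nat (Suc d))"
  shows "\<exists>p. \<forall>d\<ge>D. poly p (of_nat d) = h d"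
proof -
  obtain S where S: "\<And>x. poly S x - poly S (x - 1) = poly Q x"
    using poly_antidifference by blast
  define p where "p = S + [:h D - poly S (of_nat D):]"
  have "poly p (of_nat d) = h d" if "D \<le> d" for d
    using that
  proof (induction d rule: dec_induct)
    case (step d)
    then show ?case using assms S[of "of_nat (Suc d)"] by (simp add: p_def)
  qed (simp add: p_def)
  then show ?thesis by blast
qed

lemma is_hilbert_poly_unique:
  assumes "is_hilbert_poly n M p" "is_hilbert_poly n M q"
  shows "p = q"
proof -
  obtain d0 where d0: "\<forall>d\<ge>d0. poly p (of_nat d) = poly q (of_nat d)"
    using assms unfolding is_hilbert_poly_def by (metis nat_le_linear order_trans)
  have "infinite (of_nat ` {d0..} :: rat set)"
    by (simp add: finite_image_iff inj_on_def infinite_Ici)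
  moreover have "of_nat ` {d0..} \<subseteq> {x. poly (p - q) x = 0}" using d0 by auto
  ultimately show ?thesis using poly_roots_finite[of "p - q"] finite_subset by auto
qed

lemma hilbert_poly_eqI: "is_hilbert_poly n M p \<Longrightarrow> hilbert_poly n M = p"
  unfolding hilbert_poly_def using is_hilbert_poly_unique by blast

lemma hilb_fun_0: "hilb_fun 0 M d = (if (\<lambda>_. 0)(0 := d) \<in> M then 0 else 1)"
proof -
  have "{a \<in> monoms 0. mdeg 0 a = d} = {(\<lambda>_. 0)(0 := d)}"
    by (auto simp: monoms_def mdeg_def fun_eq_iff)
  then have "standard_monoms 0 M d = {(\<lambda>_. 0)(0 := d)} - M"
    unfolding standard_monoms_def by blast
  then show ?thesis by (simp add: hilb_fun_eq_card insert_Diff_if)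
qed

lemma hilbert_poly_exists_0:
  assumes "monomial_ideal 0 M"
  shows "\<exists>p. is_hilbert_poly 0 M p"
proof (cases "M = {}")
  case True
  then have "poly [:1:] (of_nat d) = (of_nat (hilb_fun 0 M d) :: rat)" for d
    by (simp add: hilb_fun_0)
  then show ?thesis unfolding is_hilbert_poly_def by blast
next
  case False
  then obtain a where a: "a \<in> M" by blast
  then have "a \<in> monoms 0" using assms by (auto simp: monomial_ideal_def)
  then have "(\<lambda>_. 0)(0 := d) \<in> M" if "a 0 \<le> d" for d
    using monomial_idealD[OF assms a] that by (auto simp: monoms_def mdvd_def)
  then have "poly 0 (of_nat d) = (of_nat (hilb_fun 0 M d) :: rat)" if "a 0 \<le> d" for d
    using that by (simp add: hilb_fun_0)
  then show ?thesis unfolding is_hilbert_poly_def by blast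
qed

lemma hilbert_poly_exists:
  assumes "borel n M" and "saturated n M"
  shows "\<exists>p. is_hilbert_poly n M p"
  using assms
proof (induction n arbitrary: M)
  case 0
  then show ?case using hilbert_poly_exists_0 borel_imp_monomial_ideal by blast
next
  case (Suc m)
  obtain D where D: "\<forall>d\<ge>D. hilb_fun (Suc m) M (Suc d) = hilb_fun (Suc m) M d + hilb_fun m (nabla (Suc m) M) (Suc d)"
    using eventually_hilb_fun_Suc[OF Suc.prems] by auto
  obtain Q d0 where Q: "\<forall>d\<ge>d0. poly Q (of_nat d) = (of_nat (hilb_fun m (nabla (Suc m) M) d) :: rat)"
    using Suc.IH[of "nabla (Suc m) M"] nabla_borel[OF Suc.prems(1)] nabla_saturated[of "Suc m" M]
    unfolding is_hilbert_poly_def by auto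
  have "\<forall>d\<ge>max D d0. of_nat (hilb_fun (Suc m) M (Suc d)) =
      (of_nat (hilb_fun (Suc m) M d) :: rat) + poly Q (of_nat (Suc d))"
    using D Q[rule_format, of "Suc _"] by simp
  then obtain p where "\<forall>d\<ge>max D d0. poly p (of_nat d) = (of_nat (hilb_fun (Suc m) M d) :: rat)"
    using eventually_poly_if_difference_eventually_poly[of "max D d0" "\<lambda>d. of_nat (hilb_fun (Suc m) M d)" Q]
    by auto
  then show ?case unfolding is_hilbert_poly_def by blast
qed

theorem lemma5p7:
  fixes n :: nat and M :: "(nat \<Rightarrow> nat) set"
  assumes "n \<ge> 1" and "borel n M" and "saturated n M"
  shows "hilbert_poly (n - 1) (nabla n M) = nabla_poly (hilbert_poly n M)"
proof -
  obtain P d0 where P: "is_hilbert_poly n M P" and d0: "\<forall>d\<ge>d0. poly P (of_nat d) = of_nat (hilb_fun n M d)"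
    using hilbert_poly_exists[OF assms(2,3)] unfolding is_hilbert_poly_def by blast
  obtain D where D: "\<forall>d\<ge>D. hilb_fun n M (Suc d) = hilb_fun n M d + hilb_fun (n - 1) (nabla n M) (Suc d)"
    using eventually_hilb_fun_Suc[OF assms(2,3,1)] by blast
  have "poly (nabla_poly P) (of_nat (Suc d)) = of_nat (hilb_fun (n - 1) (nabla n M) (Suc d))"
    if "max D d0 \<le> d" for d
    using that d0[rule_format, of d] d0[rule_format, of "Suc d"] D by (simp add: poly_nabla_poly)
  then have "is_hilbert_poly (n - 1) (nabla n M) (nabla_poly P)"
    unfolding is_hilbert_poly_def by (metis Suc_le_D Suc_le_mono)
  then show ?thesis using hilbert_poly_eqI[OF P] by (simp add: hilbert_poly_eqI)
qed

end
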